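(* Let $\kappa$ be a maximal clique of the IDNC graph $\mathcal G$ chosen for transmission at time $t$, and let all quantities without a time index ($\varrho_k,\psi_k$) denote their values at time $t$. Then \[ \mathbb{E}\big[|\mathcal E_\rho^{(t+1)}|\big]=\mathbb{E}\big[|\mathcal E_\rho^{(t)}|\big]-\frac12\sum_{i\in\mathcal T_\rho(\kappa)} q_i\Big(\mathbb{E}\big[\Delta_i^{(t)}\big]+\gamma_i\Big)+\frac12\sum_{i\in\mathcal T(\kappa)}\psi_i\alpha_i+\frac12\sum_{i\notin\mathcal T(\kappa)}\psi_i\beta_i , \] where $\mathbb{E}[\Delta_i^{(t)}]=D_i(\boldsymbol\varrho,\boldsymbol\psi)$ is the expected primary degree of a vertex of receiver $i$ at time $t$ and \[ \alpha_i=\sum_{k\ne i} q_i\xi_k-\sum_{k\in\mathcal T_\rho(\kappa),k\ne i}\Phi_{ik}(q_i)+\sum_{k\in\mathcal T_\sigma(\kappa),k\ne i}\Lambda_{ik}(q_i),\qquad \beta_i=-\sum_{k\in\mathcal T_\rho(\kappa),k\ne i}\Phi_{ik}(0)+\sum_{k\in\mathcal T_\sigma(\kappa),k\ne i}\Lambda_{ik}(0), \] \[ \gamma_i=\sum_{k\ne i}\xi_k-\sum_{k\in\mathcal T_\rho(\kappa),k\ne i}\Phi_{ik}(1)+\sum_{k\in\mathcal T_\sigma(\kappa),k\ne i}\Lambda_{ik}(1), \] \[ \Phi_{ik}(x)=\frac{q_k}{N}\Big(1+\frac{(\varrho_k-\psi_k+1)(\varrho_i+x)}{N-1}\Big),\quad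 \Lambda_{ik}(x)=\frac{q_k\psi_k(\varrho_i+x)}{N(N-1)},\quad \xi_k=\frac{\psi_k\varrho_k}{N(N-1)}, \] with all sums over $k\ne i$ ranging over $k\in\{1,\dots,M\}$.
   Context: A sender holds a frame $\mathcal N$ of $N\ge2$ packets and serves receivers $\mathcal M=\{1,\dots,M\}$. For each receiver $i$ there are sets $\mathcal H_i\subseteq\mathcal N$ (Has set: packets received), $\mathcal L_i=\mathcal N\setminus\mathcal H_i$ (Lacks set) and $\mathcal W_i\subseteq\mathcal L_i$ (Wants set: requested packets not yet received), with cardinalities $\varrho_i=|\mathcal H_i|$, $\varphi_i=N-\varrho_i$, $\psi_i=|\mathcal W_i|$. Receiver $i$ has packet erasure probability $p_i$ and success probability $q_i=1-p_i\in[0,1]$. The IDNC graph $\mathcal G$ has a primary vertex $v_{ij}$ for each $i\in\mathcal M$, $j\in\mathcal W_i$, and a secondary vertex $v_{ij}$ for each $i\in\mathcal M$, $j\in\mathcal L_i\setminus\mathcal W_i$; two distinct vertices $v_{ij},v_{kl}$ are adjacent iff (C1) $j=l$, or (C2) $j\in\mathcal H_k$ and $l\in\mathcal H_i$. The primary graph $\mathcal G_\rho$ is the subgraph induced by the primary vertices, with edge set $\mathcal E_\rho$. For a maximal clique $\kappa$ of $\mathcal G$ (each receiver has at most one vertex in it), $\mathcal T_\rho(\kappa)$ (resp. $\mathcal T_\sigma(\kappa)$) is the set of receivers having a primary (resp. secondary) vertex in $\kappa$, and $\mathcal T(\kappa)=\mathcal T_\rho(\kappa)\cup\mathcal T_\sigma(\kappa)$.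 Transmission model: when $\kappa$ is transmitted at time $t$, each $k\in\mathcal T(\kappa)$ receives it with probability $q_k$, independently; let $X_k\in\{0,1\}$ be the reception indicator. At time $t+1$ the cardinalities become $\varrho_k'=\varrho_k+X_k$ for $k\in\mathcal T(\kappa)$, $\psi_k'=\psi_k-X_k$ for $k\in\mathcal T_\rho(\kappa)$, and are otherwise unchanged. Expected degrees and edge counts are computed ignoring set contents (sets treated as uniformly random given their cardinalities): for cardinality vectors $\boldsymbol\varrho,\boldsymbol\psi$ put $D_i(\boldsymbol\varrho,\boldsymbol\psi)=\sum_{k\ne i}\frac{\psi_k}{N}\big(1+\frac{\varrho_k\varrho_i}{N-1}\big)$ (the expected primary degree of a vertex of receiver $i$). Then $\mathbb E[\Delta_i^{(t)}]=D_i(\boldsymbol\varrho,\boldsymbol\psi)$, $\mathbb E[|\mathcal E_\rho^{(t)}|]=\frac12\sum_i\psi_iD_i(\boldsymbol\varrho,\boldsymbol\psi)$, and $\mathbb E[|\mathcal E_\rho^{(t+1)}|]=\mathbb E_{X}\big[\frac12\sum_i\psi_i'D_i(\boldsymbol\varrho',\boldsymbol\psi')\big]$, the outer expectation over the independent receptions. *)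

theory Defs
  imports Complex_Main
begin

text \<open>Receivers are 1..M, packets are 1..N. H i is the Has set, W i the Wants set of
  receiver i. Vertices of the IDNC graph are pairs (i,j) (receiver, packet).\<close>

definition receivers :: "nat \<Rightarrow> nat set" where
  "receivers M = {1..M}"

definition Lacks :: "nat \<Rightarrow> (nat \<Rightarrow> nat set) \<Rightarrow> nat \<Rightarrow> nat set" where
  "Lacks N H i = {1..N} - H i"

definition idnc_vertices ::
  "nat \<Rightarrow> nat \<Rightarrow> (nat \<Rightarrow> nat set) \<Rightarrow> (nat \<times> nat) set" where
  "idnc_vertices N M H = {(i, j). i \<in> receivers M \<and> j \<in> Lacks N H i}"

definition is_primary :: "(nat \<Rightarrow> nat set) \<Rightarrow> nat \<times> nat \<Rightarrow> bool" where
  "is_primary W v = (snd v \<in> W (fst v))"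

definition idnc_adj :: "(nat \<Rightarrow> nat set) \<Rightarrow> nat \<times> nat \<Rightarrow> nat \<times> nat \<Rightarrow> bool" where
  "idnc_adj H v w = (v \<noteq> w \<and>
     (snd v = snd w \<or> (snd v \<in> H (fst w) \<and> snd w \<in> H (fst v))))"

definition is_clique ::
  "nat \<Rightarrow> nat \<Rightarrow> (nat \<Rightarrow> nat set) \<Rightarrow> (nat \<times> nat) set \<Rightarrow> bool" where
  "is_clique N M H K = (K \<subseteq> idnc_vertices N M H \<and>
     (\<forall>v\<in>K. \<forall>w\<in>K. v \<noteq> w \<longrightarrow> idnc_adj H v w))"

definition is_maximal_clique ::
  "nat \<Rightarrow> nat \<Rightarrow> (nat \<Rightarrow> nat set) \<Rightarrow> (nat \<times> nat) set \<Rightarrow> bool" where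
  "is_maximal_clique N M H K = (is_clique N M H K \<and>
     (\<forall>K'. is_clique N M H K' \<and> K \<subseteq> K' \<longrightarrow> K' = K))"

definition T_rho :: "(nat \<Rightarrow> nat set) \<Rightarrow> (nat \<times> nat) set \<Rightarrow> nat set" where
  "T_rho W K = {i. \<exists>j. (i, j) \<in> K \<and> j \<in> W i}"

definition T_sigma :: "(nat \<Rightarrow> nat set) \<Rightarrow> (nat \<times> nat) set \<Rightarrow> nat set" where
  "T_sigma W K = {i. \<exists>j. (i, j) \<in> K \<and> j \<notin> W i}"

definition T_all :: "(nat \<Rightarrow> nat set) \<Rightarrow> (nat \<times> nat) set \<Rightarrow> nat set" where
  "T_all W K = T_rho W K \<union> T_sigma W K"

definition D_deg :: "nat \<Rightarrow> nat \<Rightarrow> (nat \<Rightarrow> real) \<Rightarrow> (nat \<Rightarrow> real) \<Rightarrow> nat \<Rightarrow> real" where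
  "D_deg N M rho psi i =
     (\<Sum>k\<in>receivers M - {i}. psi k / real N * (1 + rho k * rho i / (real N - 1)))"

definition E_edges :: "nat \<Rightarrow> nat \<Rightarrow> (nat \<Rightarrow> real) \<Rightarrow> (nat \<Rightarrow> real) \<Rightarrow> real" where
  "E_edges N M rho psi = 1/2 * (\<Sum>i\<in>receivers M. psi i * D_deg N M rho psi i)"

text \<open>Expected number of primary edges at time t+1, after transmitting clique K:
  expectation over independent receptions; S is the set of receivers in T(K) with X_k = 1.\<close>
definition E_edges_next ::
  "nat \<Rightarrow> nat \<Rightarrow> (nat \<Rightarrow> nat set) \<Rightarrow> (nat \<Rightarrow> nat set) \<Rightarrow> (nat \<Rightarrow> real)
     \<Rightarrow> (nat \<times> nat) set \<Rightarrow> real" where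
  "E_edges_next N M H W q K =
     (\<Sum>S\<in>Pow (T_all W K).
        (\<Prod>k\<in>S. q k) * (\<Prod>k\<in>T_all W K - S. 1 - q k) *
        E_edges N M
          (\<lambda>k. real (card (H k)) + (if k \<in> S then 1 else 0))
          (\<lambda>k. real (card (W k)) - (if k \<in> S \<inter> T_rho W K then 1 else 0)))"

end

theory Submission
  imports Defs
begin

text \<open>Both sides are sums over ordered pairs of distinct receivers. At time t+1 the pair
  (i, k) contributes a term depending on the receptions only through X_i and X_k, so by
  independence its expectation involves only the marginals (q_i for receivers in T(\<kappa>),
  0 for the others). Writing D_i, \<alpha>_i, \<beta>_i and \<gamma>_i as sums over k \<noteq> i turns the
  right-hand side into a pairwise sum as well, and its (i, k) term equals the expected pair term,
  as checked separately for i, k in T_\<rho>, T_\<sigma> or neither. These two sets are disjoint because a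
  clique holds at most one vertex per receiver.\<close>

definition bernoulli_weight :: "('a \<Rightarrow> real) \<Rightarrow> 'a set \<Rightarrow> 'a set \<Rightarrow> real" where
  "bernoulli_weight q T S = (\<Prod>k\<in>S. q k) * (\<Prod>k\<in>T - S. 1 - q k)"

definition bernoulli_marginal :: "('a \<Rightarrow> real) \<Rightarrow> 'a set \<Rightarrow> 'a \<Rightarrow> real" where
  "bernoulli_marginal q T i = (if i \<in> T then q i else 0)"

definition bernoulli_expectation :: "real \<Rightarrow> (bool \<Rightarrow> real) \<Rightarrow> real" where
  "bernoulli_expectation p h = p * h True + (1 - p) * h False"

lemma sum_bernoulli_weight_insert:
  assumes "finite T" "a \<notin> T"
  shows "(\<Sum>S\<in>Pow (insert a T). bernoulli_weight q (insert a T) S * f S)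
    = q a * (\<Sum>S\<in>Pow T. bernoulli_weight q T S * f (insert a S))
      + (1 - q a) * (\<Sum>S\<in>Pow T. bernoulli_weight q T S * f S)"
proof -
  have without_a: "bernoulli_weight q (insert a T) S = (1 - q a) * bernoulli_weight q T S"
    if "S \<in> Pow T" for S
  proof -
    have "insert a T - S = insert a (T - S)" using that assms by auto
    then show ?thesis using assms unfolding bernoulli_weight_def by simp
  qed
  have with_a: "bernoulli_weight q (insert a T) (insert a S) = q a * bernoulli_weight q T S"
    if "S \<in> Pow T" for S
  proof -
    have "insert a T - insert a S = T - S" "finite S" "a \<notin> S"
      using that assms finite_subset by auto
    then show ?thesis unfolding bernoulli_weight_def by simp
  qed
  have "inj_on (insert a) (Pow T)"
    using assms(2) unfolding inj_on_def by (metis PowD insert_ident subsetD)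
  moreover have "Pow T \<inter> insert a ` Pow T = {}" using assms(2) by auto
  ultimately have "(\<Sum>S\<in>Pow (insert a T). bernoulli_weight q (insert a T) S * f S)
     = (\<Sum>S\<in>Pow T. bernoulli_weight q (insert a T) (insert a S) * f (insert a S))
       + (\<Sum>S\<in>Pow T. bernoulli_weight q (insert a T) S * f S)"
    using assms(1) by (simp add: Pow_insert sum.union_disjoint sum.reindex)
  also have "(\<Sum>S\<in>Pow T. bernoulli_weight q (insert a T) (insert a S) * f (insert a S))
      = q a * (\<Sum>S\<in>Pow T. bernoulli_weight q T S * f (insert a S))"
    unfolding sum_distrib_left by (intro sum.cong refl) (simp add: with_a)
  also have "(\<Sum>S\<in>Pow T. bernoulli_weight q (insert a T) S * f S)
      = (1 - q a) * (\<Sum>S\<in>Pow T. bernoulli_weight q T S * f S)"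
    unfolding sum_distrib_left by (intro sum.cong refl) (simp add: without_a)
  finally show ?thesis .
qed

lemma sum_bernoulli_weight:
  assumes "finite T"
  shows "(\<Sum>S\<in>Pow T. bernoulli_weight q T S) = 1"
  using assms
proof (induction T rule: finite_induct)
  case empty
  then show ?case by (simp add: bernoulli_weight_def)
next
  case (insert a T)
  then show ?case using sum_bernoulli_weight_insert[of T a q "\<lambda>_. 1"] by simp
qed

lemma sum_bernoulli_weight_indicator:
  assumes "finite T"
  shows "(\<Sum>S\<in>Pow T. bernoulli_weight q T S * h (i \<in> S))
    = bernoulli_expectation (bernoulli_marginal q T i) h"
proof (cases "i \<in> T")
  case True
  define T' where "T' = T - {i}"
  have T: "T = insert i T'" "finite T'" "i \<notin> T'" using True assms by (auto simp: T'_def)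
  have i_notin: "i \<notin> S" if "S \<in> Pow T'" for S using that T(3) by blast
  have "(\<Sum>S\<in>Pow T'. bernoulli_weight q T' S * h (i \<in> S))
      = (\<Sum>S\<in>Pow T'. bernoulli_weight q T' S) * h False"
    unfolding sum_distrib_right by (intro sum.cong refl) (simp add: i_notin)
  then show ?thesis
    using sum_bernoulli_weight_insert[OF T(2,3), of q "\<lambda>S. h (i \<in> S)"]
    by (simp add: T(1) sum_bernoulli_weight[OF T(2)] flip: sum_distrib_right)
      (simp add: bernoulli_expectation_def bernoulli_marginal_def)
next
  case False
  then have i_notin: "i \<notin> S" if "S \<in> Pow T" for S using that by blast
  have "(\<Sum>S\<in>Pow T. bernoulli_weight q T S * h (i \<in> S))
      = (\<Sum>S\<in>Pow T. bernoulli_weight q T S) * h False"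
    unfolding sum_distrib_right by (intro sum.cong refl) (simp add: i_notin)
  then show ?thesis using False assms
    by (simp add: sum_bernoulli_weight bernoulli_expectation_def bernoulli_marginal_def)
qed

lemma sum_bernoulli_weight_pair:
  assumes "finite T" "i \<noteq> k"
  shows "(\<Sum>S\<in>Pow T. bernoulli_weight q T S * g (i \<in> S) (k \<in> S))
    = bernoulli_expectation (bernoulli_marginal q T i)
        (\<lambda>x. bernoulli_expectation (bernoulli_marginal q T k) (g x))"
proof (cases "i \<in> T")
  case True
  define T' where "T' = T - {i}"
  have T: "T = insert i T'" "finite T'" "i \<notin> T'" using True assms by (auto simp: T'_def)
  have i_notin: "i \<notin> S" if "S \<in> Pow T'" for S using that T(3) by blast
  have marginal_k: "bernoulli_marginal q T' k = bernoulli_marginal q T k"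
    using assms(2) by (simp add: T bernoulli_marginal_def)
  have "(\<Sum>S\<in>Pow T'. bernoulli_weight q T' S * g (i \<in> insert i S) (k \<in> insert i S))
      = (\<Sum>S\<in>Pow T'. bernoulli_weight q T' S * g True (k \<in> S))"
    using assms(2) by (intro sum.cong) auto
  moreover have "(\<Sum>S\<in>Pow T'. bernoulli_weight q T' S * g (i \<in> S) (k \<in> S))
      = (\<Sum>S\<in>Pow T'. bernoulli_weight q T' S * g False (k \<in> S))"
    by (intro sum.cong refl) (simp add: i_notin)
  ultimately show ?thesis
    using sum_bernoulli_weight_insert[OF T(2,3), of q "\<lambda>S. g (i \<in> S) (k \<in> S)"]
    by (simp add: T(1)[symmetric] sum_bernoulli_weight_indicator[OF T(2)] marginal_k)
      (simp add: bernoulli_expectation_def bernoulli_marginal_def True)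
next
  case False
  then have i_notin: "i \<notin> S" if "S \<in> Pow T" for S using that by blast
  have "(\<Sum>S\<in>Pow T. bernoulli_weight q T S * g (i \<in> S) (k \<in> S))
      = (\<Sum>S\<in>Pow T. bernoulli_weight q T S * g False (k \<in> S))"
    by (intro sum.cong refl) (simp add: i_notin)
  then show ?thesis using False assms(1)
    by (simp add: sum_bernoulli_weight_indicator bernoulli_expectation_def bernoulli_marginal_def)
qed

lemma sum_bernoulli_weight_offdiag:
  assumes "finite T" "finite R"
  shows "(\<Sum>S\<in>Pow T. bernoulli_weight q T S * (\<Sum>i\<in>R. \<Sum>k\<in>R - {i}. g i k (i \<in> S) (k \<in> S)))
    = (\<Sum>i\<in>R. \<Sum>k\<in>R - {i}. bernoulli_expectation (bernoulli_marginal q T i)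
         (\<lambda>x. bernoulli_expectation (bernoulli_marginal q T k) (g i k x)))"
proof -
  have "(\<Sum>S\<in>Pow T. bernoulli_weight q T S * (\<Sum>i\<in>R. \<Sum>k\<in>R - {i}. g i k (i \<in> S) (k \<in> S)))
      = (\<Sum>i\<in>R. \<Sum>k\<in>R - {i}. \<Sum>S\<in>Pow T. bernoulli_weight q T S * g i k (i \<in> S) (k \<in> S))"
    by (simp add: sum_distrib_left sum.swap[of _ "Pow T"])
  also have "\<dots> = (\<Sum>i\<in>R. \<Sum>k\<in>R - {i}. bernoulli_expectation (bernoulli_marginal q T i)
         (\<lambda>x. bernoulli_expectation (bernoulli_marginal q T k) (g i k x)))"
    by (intro sum.cong refl) (rule sum_bernoulli_weight_pair[OF assms(1)]; auto)
  finally show ?thesis .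
qed

lemma sum_subset_of_bool:
  fixes f :: "'a \<Rightarrow> real"
  assumes "finite A" "B \<subseteq> A"
  shows "sum f B = (\<Sum>x\<in>A. of_bool (x \<in> B) * f x)"
  using sum.inter_restrict[OF assms(1), of f B] assms(2) by (simp add: Int_absorb1) (rule sum.cong; simp)

lemma finite_receivers: "finite (receivers M)"
  by (simp add: receivers_def)

locale idnc_transmission =
  fixes N M :: nat and rho psi q :: "nat \<Rightarrow> real" and Tr Ts :: "nat set"
  assumes Tr_receivers: "Tr \<subseteq> receivers M" and Ts_receivers: "Ts \<subseteq> receivers M"
    and Tr_Ts_disjoint: "Tr \<inter> Ts = {}"
begin

definition xi :: "nat \<Rightarrow> real" where
  "xi k = psi k * rho k / (real N * (real N - 1))"

definition Phi :: "nat \<Rightarrow> nat \<Rightarrow> real \<Rightarrow> real" where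
  "Phi i k x = q k / real N * (1 + (rho k - psi k + 1) * (rho i + x) / (real N - 1))"

definition Lambda :: "nat \<Rightarrow> nat \<Rightarrow> real \<Rightarrow> real" where
  "Lambda i k x = q k * psi k * (rho i + x) / (real N * (real N - 1))"

text \<open>The paper's \<alpha>_i, \<beta>_i and \<gamma>_i are correction i evaluated at q_i, 0 and 1.\<close>

definition correction :: "nat \<Rightarrow> real \<Rightarrow> real" where
  "correction i x = (\<Sum>k\<in>receivers M - {i}. x * xi k)
     - (\<Sum>k\<in>Tr - {i}. Phi i k x) + (\<Sum>k\<in>Ts - {i}. Lambda i k x)"

definition correction_term :: "nat \<Rightarrow> nat \<Rightarrow> real \<Rightarrow> real" where
  "correction_term i k x = x * xi k - of_bool (k \<in> Tr) * Phi i k x + of_bool (k \<in> Ts) * Lambda i k x"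

definition degree_term :: "nat \<Rightarrow> nat \<Rightarrow> real" where
  "degree_term i k = psi k / real N * (1 + rho k * rho i / (real N - 1))"

definition pair_term_after :: "nat \<Rightarrow> nat \<Rightarrow> bool \<Rightarrow> bool \<Rightarrow> real" where
  "pair_term_after i k x y = (psi i - of_bool (x \<and> i \<in> Tr)) *
     ((psi k - of_bool (y \<and> k \<in> Tr)) / real N * (1 + (rho k + of_bool y) * (rho i + of_bool x) / (real N - 1)))"

definition rhs_pair_term :: "nat \<Rightarrow> nat \<Rightarrow> real" where
  "rhs_pair_term i k = psi i * degree_term i k - of_bool (i \<in> Tr) * q i * (degree_term i k + correction_term i k 1)
     + psi i * correction_term i k (bernoulli_marginal q (Tr \<union> Ts) i)"

lemma D_deg_eq_sum: "D_deg N M rho psi i = (\<Sum>k\<in>receivers M - {i}. degree_term i k)"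
  by (simp add: D_deg_def degree_term_def)

lemma correction_eq_sum: "correction i x = (\<Sum>k\<in>receivers M - {i}. correction_term i k x)"
proof -
  have "(\<Sum>k\<in>Tr - {i}. Phi i k x) = (\<Sum>k\<in>receivers M - {i}. of_bool (k \<in> Tr) * Phi i k x)"
    using Tr_receivers by (subst sum_subset_of_bool[of "receivers M - {i}"]) (auto simp: finite_receivers)
  moreover have "(\<Sum>k\<in>Ts - {i}. Lambda i k x) = (\<Sum>k\<in>receivers M - {i}. of_bool (k \<in> Ts) * Lambda i k x)"
    using Ts_receivers by (subst sum_subset_of_bool[of "receivers M - {i}"]) (auto simp: finite_receivers)
  ultimately show ?thesis
    by (simp add: correction_def correction_term_def sum.distrib sum_subtractf)
qed

lemma E_edges_after_pairwise:
  "E_edges N M (\<lambda>k. rho k + (if k \<in> S then 1 else 0)) (\<lambda>k. psi k - (if k \<in> S \<inter> Tr then 1 else 0))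
   = 1/2 * (\<Sum>i\<in>receivers M. \<Sum>k\<in>receivers M - {i}. pair_term_after i k (i \<in> S) (k \<in> S))"
  unfolding E_edges_def D_deg_def sum_distrib_left pair_term_after_def
  by (intro arg_cong[where f="\<lambda>x. 1/2 * x"] sum.cong refl) (simp add: of_bool_def)

lemma expected_edges_after_pairwise:
  "(\<Sum>S\<in>Pow (Tr \<union> Ts). bernoulli_weight q (Tr \<union> Ts) S *
      E_edges N M (\<lambda>k. rho k + (if k \<in> S then 1 else 0)) (\<lambda>k. psi k - (if k \<in> S \<inter> Tr then 1 else 0)))
   = 1/2 * (\<Sum>i\<in>receivers M. \<Sum>k\<in>receivers M - {i}.
       bernoulli_expectation (bernoulli_marginal q (Tr \<union> Ts) i)
         (\<lambda>x. bernoulli_expectation (bernoulli_marginal q (Tr \<union> Ts) k) (pair_term_after i k x)))"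
proof -
  have "finite (Tr \<union> Ts)"
    using Tr_receivers Ts_receivers finite_receivers by (auto intro: finite_subset)
  then show ?thesis
    unfolding E_edges_after_pairwise mult.left_commute[of _ "1/2"]
    by (simp only: flip: sum_distrib_left) (simp add: sum_bernoulli_weight_offdiag finite_receivers)
qed

text \<open>No hypothesis on N is needed: after divide_inverse each of the nine membership cases is a
  ring identity in the atoms inverse N and inverse (N - 1).\<close>

lemma rhs_pair_term_eq_expectation:
  "rhs_pair_term i k
   = bernoulli_expectation (bernoulli_marginal q (Tr \<union> Ts) i)
       (\<lambda>x. bernoulli_expectation (bernoulli_marginal q (Tr \<union> Ts) k) (pair_term_after i k x))"
proof -
  have "(i \<in> Tr \<and> i \<notin> Ts) \<or> (i \<notin> Tr \<and> i \<in> Ts) \<or> (i \<notin> Tr \<and> i \<notin> Ts)"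
    and "(k \<in> Tr \<and> k \<notin> Ts) \<or> (k \<notin> Tr \<and> k \<in> Ts) \<or> (k \<notin> Tr \<and> k \<notin> Ts)"
    using Tr_Ts_disjoint by blast+
  then show ?thesis
    unfolding rhs_pair_term_def correction_term_def degree_term_def pair_term_after_def
      bernoulli_expectation_def bernoulli_marginal_def xi_def Phi_def Lambda_def
      divide_inverse inverse_mult_distrib
    by (elim disjE conjE; simp only: if_True if_False Un_iff simp_thms of_bool_eq; algebra)
qed

lemma rhs_pair_term_sum:
  "(\<Sum>k\<in>receivers M - {i}. rhs_pair_term i k)
   = psi i * D_deg N M rho psi i - of_bool (i \<in> Tr) * q i * (D_deg N M rho psi i + correction i 1)
     + psi i * correction i (bernoulli_marginal q (Tr \<union> Ts) i)"
  unfolding rhs_pair_term_def D_deg_eq_sum correction_eq_sum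
  by (simp only: sum.distrib sum_subtractf flip: sum_distrib_left)

lemma rhs_pairwise:
  "E_edges N M rho psi
     - 1/2 * (\<Sum>i\<in>Tr. q i * (D_deg N M rho psi i + correction i 1))
     + 1/2 * (\<Sum>i\<in>Tr \<union> Ts. psi i * correction i (q i))
     + 1/2 * (\<Sum>i\<in>receivers M - (Tr \<union> Ts). psi i * correction i 0)
   = 1/2 * (\<Sum>i\<in>receivers M. \<Sum>k\<in>receivers M - {i}. rhs_pair_term i k)"
proof -
  have T_receivers: "Tr \<union> Ts \<subseteq> receivers M" using Tr_receivers Ts_receivers by blast
  have "(\<Sum>i\<in>Tr. q i * (D_deg N M rho psi i + correction i 1))
      = (\<Sum>i\<in>receivers M. of_bool (i \<in> Tr) * q i * (D_deg N M rho psi i + correction i 1))"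
    by (simp add: sum_subset_of_bool[OF finite_receivers Tr_receivers] mult.assoc)
  moreover have "(\<Sum>i\<in>Tr \<union> Ts. psi i * correction i (q i))
      + (\<Sum>i\<in>receivers M - (Tr \<union> Ts). psi i * correction i 0)
      = (\<Sum>i\<in>receivers M. psi i * correction i (bernoulli_marginal q (Tr \<union> Ts) i))"
  proof -
    have "(\<Sum>i\<in>receivers M. psi i * correction i (bernoulli_marginal q (Tr \<union> Ts) i))
        = (\<Sum>i\<in>receivers M - (Tr \<union> Ts). psi i * correction i (bernoulli_marginal q (Tr \<union> Ts) i))
          + (\<Sum>i\<in>Tr \<union> Ts. psi i * correction i (bernoulli_marginal q (Tr \<union> Ts) i))"
      by (rule sum.subset_diff[OF T_receivers finite_receivers])
    also have "\<dots> = (\<Sum>i\<in>receivers M - (Tr \<union> Ts). psi i * correction i 0)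
          + (\<Sum>i\<in>Tr \<union> Ts. psi i * correction i (q i))"
      by (intro arg_cong2[where f="(+)"] sum.cong refl) (auto simp: bernoulli_marginal_def)
    finally show ?thesis by simp
  qed
  ultimately have "E_edges N M rho psi
     - 1/2 * (\<Sum>i\<in>Tr. q i * (D_deg N M rho psi i + correction i 1))
     + 1/2 * (\<Sum>i\<in>Tr \<union> Ts. psi i * correction i (q i))
     + 1/2 * (\<Sum>i\<in>receivers M - (Tr \<union> Ts). psi i * correction i 0)
   = 1/2 * ((\<Sum>i\<in>receivers M. psi i * D_deg N M rho psi i)
     - (\<Sum>i\<in>receivers M. of_bool (i \<in> Tr) * q i * (D_deg N M rho psi i + correction i 1))
     + (\<Sum>i\<in>receivers M. psi i * correction i (bernoulli_marginal q (Tr \<union> Ts) i)))"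
    unfolding E_edges_def by argo
  then show ?thesis
    by (simp only: rhs_pair_term_sum sum.distrib sum_subtractf)
qed

theorem expected_edges_after_transmission:
  "(\<Sum>S\<in>Pow (Tr \<union> Ts). bernoulli_weight q (Tr \<union> Ts) S *
      E_edges N M (\<lambda>k. rho k + (if k \<in> S then 1 else 0)) (\<lambda>k. psi k - (if k \<in> S \<inter> Tr then 1 else 0)))
   = E_edges N M rho psi
     - 1/2 * (\<Sum>i\<in>Tr. q i * (D_deg N M rho psi i + correction i 1))
     + 1/2 * (\<Sum>i\<in>Tr \<union> Ts. psi i * correction i (q i))
     + 1/2 * (\<Sum>i\<in>receivers M - (Tr \<union> Ts). psi i * correction i 0)"
  unfolding expected_edges_after_pairwise rhs_pairwise rhs_pair_term_eq_expectation ..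

end

lemma idnc_transmission_of_clique:
  assumes "is_clique N M H K"
  shows "idnc_transmission M (T_rho W K) (T_sigma W K)"
proof
  from assms have K_vertices: "K \<subseteq> idnc_vertices N M H"
    and K_adjacent: "\<And>v w. v \<in> K \<Longrightarrow> w \<in> K \<Longrightarrow> v \<noteq> w \<Longrightarrow> idnc_adj H v w"
    unfolding is_clique_def by auto
  show "T_rho W K \<subseteq> receivers M" "T_sigma W K \<subseteq> receivers M"
    using K_vertices unfolding T_rho_def T_sigma_def idnc_vertices_def by auto
  show "T_rho W K \<inter> T_sigma W K = {}"
  proof (rule ccontr)
    assume "T_rho W K \<inter> T_sigma W K \<noteq> {}"
    then obtain i j l where "(i, j) \<in> K" "j \<in> W i" "(i, l) \<in> K" "l \<notin> W i"
      unfolding T_rho_def T_sigma_def by auto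
    moreover from this have "j \<noteq> l" by auto
    ultimately have "j \<in> H i" "j \<in> Lacks N H i"
      using K_adjacent[of "(i, j)" "(i, l)"] K_vertices
      by (auto simp: idnc_adj_def idnc_vertices_def)
    then show False by (simp add: Lacks_def)
  qed
qed

theorem theorem1:
  fixes N M :: nat and H W :: "nat \<Rightarrow> nat set" and q :: "nat \<Rightarrow> real"
    and K :: "(nat \<times> nat) set"
  assumes "N \<ge> 2"
    and "\<forall>i\<in>receivers M. H i \<subseteq> {1..N}"
    and "\<forall>i\<in>receivers M. W i \<subseteq> Lacks N H i"
    and "\<forall>i\<in>receivers M. 0 \<le> q i \<and> q i \<le> 1"
    and "is_maximal_clique N M H K"
  shows
    "let rho = (\<lambda>k. real (card (H k)));
         psi = (\<lambda>k. real (card (W k)));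
         Tr = T_rho W K; Ts = T_sigma W K; T = T_all W K;
         xi = (\<lambda>k. psi k * rho k / (real N * (real N - 1)));
         Phi = (\<lambda>i k x. q k / real N * (1 + (rho k - psi k + 1) * (rho i + x) / (real N - 1)));
         Lambda = (\<lambda>i k x. q k * psi k * (rho i + x) / (real N * (real N - 1)));
         alpha = (\<lambda>i. (\<Sum>k\<in>receivers M - {i}. q i * xi k)
                    - (\<Sum>k\<in>Tr - {i}. Phi i k (q i)) + (\<Sum>k\<in>Ts - {i}. Lambda i k (q i)));
         beta = (\<lambda>i. - (\<Sum>k\<in>Tr - {i}. Phi i k 0) + (\<Sum>k\<in>Ts - {i}. Lambda i k 0));
         gamma = (\<lambda>i. (\<Sum>k\<in>receivers M - {i}. xi k)
                    - (\<Sum>k\<in>Tr - {i}. Phi i k 1) + (\<Sum>k\<in>Ts - {i}. Lambda i k 1))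
     in E_edges_next N M H W q K =
          E_edges N M rho psi
          - 1/2 * (\<Sum>i\<in>Tr. q i * (D_deg N M rho psi i + gamma i))
          + 1/2 * (\<Sum>i\<in>T. psi i * alpha i)
          + 1/2 * (\<Sum>i\<in>receivers M - T. psi i * beta i)"
proof -
  have "is_clique N M H K" using assms(5) by (simp add: is_maximal_clique_def)
  then interpret idnc_transmission N M "\<lambda>k. real (card (H k))" "\<lambda>k. real (card (W k))" q
      "T_rho W K" "T_sigma W K"
    by (rule idnc_transmission_of_clique)
  show ?thesis
    using expected_edges_after_transmission
    unfolding Let_def E_edges_next_def T_all_def bernoulli_weight_def correction_def
      xi_def Phi_def Lambda_def
    by simp
qed


end
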